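(* Let $\mathbf{x}_1,\dots,\mathbf{x}_m\in(\mathbb{C}^* )^n$ and $\mathbf{x}_i^{-1}=(1/x_i^1,\dots,1/x_i^n)$. For $1\le i\le m$ and $i\le j\le n$, $\frac{\Delta_{[1,i-1],[j-i+2,j]}(H(\mathbf{x}_1^{-1})\cdots H(\mathbf{x}_m^{-1}))}{\Delta_{[1,i],[j-i+1,j]}(H(\mathbf{x}_1^{-1})\cdots H(\mathbf{x}_m^{-1}))}=\frac{\Delta_{[i,j],[1,j-i+1]}(W(\mathbf{x}_1)\cdots W(\mathbf{x}_m))}{\Delta_{[i+1,j],[1,j-i]}(W(\mathbf{x}_1)\cdots W(\mathbf{x}_m))}.$
   Context: All matrices are $n\times n$. $\Delta_{I,J}(A)$ is the minor of $A$ with rows $I$ and columns $J$; $\Delta_{\emptyset,\emptyset}=1$. For $\mathbf{x}_i=(x_i^1,\dots,x_i^n)$, $W(\mathbf{x}_i)$ has diagonal $x_i^1,\dots,x_i^n$, $1$'s directly below the diagonal and $0$ elsewhere. For $(a^1,\dots,a^n)$, $H(a^1,\dots,a^n)=\sum_{k\le l}a^ka^{k+1}\cdots a^lE_{kl}$ (upper triangular), where $E_{kl}$ is a matrix unit. *)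

theory Defs
  imports "Jordan_Normal_Form.Determinant" "Jordan_Normal_Form.DL_Submatrix"
begin

text \<open>Matrices are n x n JNF matrices (0-indexed internally); the paper's 1-indexed
  row/column k corresponds to internal index k-1. Vectors a = (a^1,...,a^n) are
  functions nat => complex, with a k the k-th coordinate (1 <= k <= n).\<close>

definition W_mat :: "nat \<Rightarrow> (nat \<Rightarrow> complex) \<Rightarrow> complex mat" where
  "W_mat n a = mat n n (\<lambda>(r,c). if r = c then a (r+1) else if r = c + 1 then 1 else 0)"

definition H_mat :: "nat \<Rightarrow> (nat \<Rightarrow> complex) \<Rightarrow> complex mat" where
  "H_mat n a = mat n n (\<lambda>(r,c). if r \<le> c then (\<Prod>t\<in>{r+1..c+1}. a t) else 0)"

text \<open>Minor with 1-indexed row set I and column set J; the empty minor is det of a 0x0 matrix = 1.\<close>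
definition Delta :: "complex mat \<Rightarrow> nat set \<Rightarrow> nat set \<Rightarrow> complex" where
  "Delta A I J = det (submatrix A ((\<lambda>k. k - 1) ` I) ((\<lambda>k. k - 1) ` J))"

text \<open>Products H(x_1^{-1}) ... H(x_m^{-1}) and W(x_1) ... W(x_m), where x i k = x_i^k.\<close>
definition prodH :: "nat \<Rightarrow> nat \<Rightarrow> (nat \<Rightarrow> nat \<Rightarrow> complex) \<Rightarrow> complex mat" where
  "prodH n m x = foldr (\<lambda>i A. H_mat n (\<lambda>k. 1 / x i k) * A) [1..<m+1] (1\<^sub>m n)"

definition prodW :: "nat \<Rightarrow> nat \<Rightarrow> (nat \<Rightarrow> nat \<Rightarrow> complex) \<Rightarrow> complex mat" where
  "prodW n m x = foldr (\<lambda>i A. W_mat n (x i) * A) [1..<m+1] (1\<^sub>m n)"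

end

theory Submission
  imports Defs
begin

text \<open>The signed transpose S(X), with entries (-1)^(i+j) X_ji, reverses products, and
  S(H(a^-1)) is the inverse of the lower bidiagonal matrix W(a): multiplying by W(a) makes the
  signed partial products of H(a^-1) telescope. Hence P = W(x_1)...W(x_m) has inverse S(Q) for
  Q = H(x_1^-1)...H(x_m^-1). As P is lower triangular, its leading j x j block A is inverted by
  the leading j x j block of S(Q), and Jacobi's complementary minor formula applied to A shows,
  for p + q = j, that the minor of P on rows p+1..j and columns 1..q is det A times the minor
  of Q on rows 1..p and columns q+1..j. Both ratios of the statement are quotients of such
  minors for the same j, so det A cancels.\<close>

definition square_block :: "'a mat \<Rightarrow> nat \<Rightarrow> nat \<Rightarrow> nat \<Rightarrow> 'a mat" where
  "square_block A r c p = mat p p (\<lambda>(i, j). A $$ (r + i, c + j))"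

lemma square_block_carrier [simp]: "square_block A r c p \<in> carrier_mat p p"
  and dim_square_block [simp]: "dim_row (square_block A r c p) = p" "dim_col (square_block A r c p) = p"
  and index_square_block [simp]:
    "i < p \<Longrightarrow> j < p \<Longrightarrow> square_block A r c p $$ (i, j) = A $$ (r + i, c + j)"
  unfolding square_block_def by auto

lemma square_block_square_block:
  assumes "r' + p' \<le> p" "c' + p' \<le> p"
  shows "square_block (square_block A r c p) r' c' p' = square_block A (r + r') (c + c') p'"
  using assms by (intro eq_matI) (auto simp: add.assoc)

lemma square_block_one_mat: "k \<le> n \<Longrightarrow> square_block (1\<^sub>m n) 0 0 k = 1\<^sub>m k"
  by (intro eq_matI) auto

lemma pick_atLeastLessThan:
  assumes "k < p"
  shows "pick {s..<s + p} k = s + k"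
proof -
  have "{a \<in> {s..<s + p}. a < s + k} = {s..<s + k}"
    using assms by auto
  then show ?thesis
    using pick_card_in_set[of "s + k" "{s..<s + p}"] assms by simp
qed

lemma submatrix_atLeastLessThan:
  assumes "r + p \<le> dim_row A" "c + p \<le> dim_col A"
  shows "submatrix A {r..<r + p} {c..<c + p} = square_block A r c p"
proof -
  have rows: "{i. i < dim_row A \<and> i \<in> {r..<r + p}} = {r..<r + p}"
    and cols: "{j. j < dim_col A \<and> j \<in> {c..<c + p}} = {c..<c + p}"
    using assms by auto
  show ?thesis
    unfolding submatrix_def rows cols by (intro eq_matI) (auto simp: pick_atLeastLessThan)
qed

lemma Delta_square_block:
  assumes "r + p \<le> dim_row A" "c + p \<le> dim_col A"
  shows "Delta A {Suc r..r + p} {Suc c..c + p} = det (square_block A r c p)"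
proof -
  have shift: "(\<lambda>k. k - 1) ` {Suc s..t} = {s..<t}" for s t :: nat
    by (auto simp: image_iff intro!: bexI[of _ "Suc _"])
  show ?thesis
    unfolding Delta_def shift submatrix_atLeastLessThan[OF assms] ..
qed

lemma det_append_identity_columns:
  "det (mat (p + q) (p + q) (\<lambda>(i, j). if j < q then f i j else if i = j - q then 1 else 0))
   = (-1) ^ (p * q) * det (mat q q (\<lambda>(i, j). f (p + i) j))"
proof (induction p arbitrary: f)
  case 0
  then show ?case by (simp, intro arg_cong[where f = det] eq_matI) auto
next
  case (Suc p)
  let ?M = "mat (Suc p + q) (Suc p + q)
    (\<lambda>(i, j). if j < q then f i j else if i = j - q then 1 else (0 :: 'a))"
  have "det ?M = (\<Sum>i<Suc (p + q). ?M $$ (i, q) * cofactor ?M i q)"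
    by (rule laplace_expansion_column) auto
  also have "\<dots> = (\<Sum>i\<in>{0}. ?M $$ (i, q) * cofactor ?M i q)"
    by (rule sum.mono_neutral_right) auto
  also have "\<dots> = (-1) ^ q * det (mat_delete ?M 0 q)"
    by (simp add: cofactor_def)
  also have "mat_delete ?M 0 q = mat (p + q) (p + q)
      (\<lambda>(i, j). if j < q then f (Suc i) j else if i = j - q then 1 else 0)"
    unfolding mat_delete_def by (rule eq_matI) (auto simp: Suc_diff_le not_less)
  also have "det \<dots> = (-1) ^ (p * q) * det (mat q q (\<lambda>(i, j). f (Suc p + i) j))"
    using Suc.IH[of "\<lambda>i. f (Suc i)"] by simp
  finally show ?case by (simp add: power_add)
qed

lemma jacobi_complementary_minor:
  fixes A B :: "'a :: idom mat"
  assumes A: "A \<in> carrier_mat (p + q) (p + q)" and B: "B \<in> carrier_mat (p + q) (p + q)"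
    and AB: "A * B = 1\<^sub>m (p + q)"
  shows "det (square_block A p 0 q) = (-1) ^ (p * q) * det A * det (square_block B q 0 p)"
proof -
  define Y where "Y = mat (p + q) (p + q)
    (\<lambda>(k, j). if j < q then 1\<^sub>m (p + q) $$ (k, j) else B $$ (k, j - q))"
  have Y: "Y \<in> carrier_mat (p + q) (p + q)" by (simp add: Y_def)
  have "Y = four_block_mat (1\<^sub>m q) (mat q p (\<lambda>(i, j). B $$ (i, j))) (0\<^sub>m p q) (square_block B q 0 p)"
    by (rule eq_matI) (auto simp: Y_def)
  then have det_Y: "det Y = det (square_block B q 0 p)"
    by (simp, subst det_four_block_mat_lower_left_zero) auto
  \<comment> \<open>Y consists of q unit vectors followed by the first p columns of B = A^-1, so A Y
    consists of the first q columns of A followed by the first p unit vectors.\<close>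
  have col_Y: "col Y j = (if j < q then unit_vec (p + q) j else col B (j - q))" if "j < p + q" for j
    using that B by (intro eq_vecI) (auto simp: Y_def)
  let ?AY = "mat (p + q) (p + q)
    (\<lambda>(i, j). if j < q then A $$ (i, j) else if i = j - q then 1 else (0 :: 'a))"
  have "A * Y = ?AY"
  proof (rule eq_matI)
    fix i j assume "i < dim_row ?AY" "j < dim_col ?AY"
    then have i: "i < p + q" and j: "j < p + q" by auto
    have "(A * B) $$ (i, j - q) = row A i \<bullet> col B (j - q)" if "\<not> j < q"
      using that i j A B by simp
    then show "(A * Y) $$ (i, j) = ?AY $$ (i, j)"
      using i j A Y by (auto simp: col_Y AB)
  qed (use A Y in auto)
  then have "det (A * Y) = (-1) ^ (p * q) * det (square_block A p 0 q)"
    by (simp add: det_append_identity_columns square_block_def)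
  moreover have "det (A * Y) = det A * det (square_block B q 0 p)"
    using det_mult[OF A Y] det_Y by simp
  ultimately have "(-1) ^ (p * q) * det (square_block A p 0 q) = det A * det (square_block B q 0 p)"
    by simp
  moreover have "(-1 :: 'a) ^ (p * q) * (-1) ^ (p * q) = 1"
    by (simp flip: power_add)
  ultimately show ?thesis
    by (metis mult.assoc mult_1)
qed

lemma lower_triangular_leading_block_mult:
  assumes P: "P \<in> carrier_mat n n" and R: "R \<in> carrier_mat n n"
    and lower: "\<And>i j. i < j \<Longrightarrow> j < n \<Longrightarrow> P $$ (i, j) = 0" and "k \<le> n"
  shows "square_block P 0 0 k * square_block R 0 0 k = square_block (P * R) 0 0 k"
proof (rule eq_matI)
  let ?L = "square_block P 0 0 k * square_block R 0 0 k" and ?R = "square_block (P * R) 0 0 k"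
  fix i j assume "i < dim_row ?R" "j < dim_col ?R"
  then have i: "i < k" and j: "j < k" by auto
  have "?L $$ (i, j) = (\<Sum>l<k. P $$ (i, l) * R $$ (l, j))"
    using i j by (simp add: scalar_prod_def lessThan_atLeast0)
  also have "\<dots> = (\<Sum>l<n. P $$ (i, l) * R $$ (l, j))"
    using lower i \<open>k \<le> n\<close> by (intro sum.mono_neutral_left) auto
  also have "\<dots> = ?R $$ (i, j)"
    using i j P R \<open>k \<le> n\<close> by (simp add: scalar_prod_def lessThan_atLeast0)
  finally show "?L $$ (i, j) = ?R $$ (i, j)" .
qed auto

lemma lower_triangular_mult:
  assumes A: "A \<in> carrier_mat n n" and B: "B \<in> carrier_mat n n"
    and "\<And>i j. i < j \<Longrightarrow> j < n \<Longrightarrow> A $$ (i, j) = 0"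
    and "\<And>i j. i < j \<Longrightarrow> j < n \<Longrightarrow> B $$ (i, j) = 0"
    and "i < j" "j < n"
  shows "(A * B) $$ (i, j) = 0"
proof -
  have "A $$ (i, l) * B $$ (l, j) = 0" if "l < n" for l
    using assms that by (cases "i < l") auto
  then show ?thesis
    using assms by (simp add: scalar_prod_def)
qed

definition sign_transpose_mat :: "'a :: comm_ring_1 mat \<Rightarrow> 'a mat" where
  "sign_transpose_mat A = mat (dim_col A) (dim_row A) (\<lambda>(i, j). (-1) ^ (i + j) * A $$ (j, i))"

lemma sign_transpose_carrier [simp]: "A \<in> carrier_mat n n \<Longrightarrow> sign_transpose_mat A \<in> carrier_mat n n"
  and dim_sign_transpose [simp]:
    "dim_row (sign_transpose_mat A) = dim_col A" "dim_col (sign_transpose_mat A) = dim_row A"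
  and index_sign_transpose [simp]: "i < dim_col A \<Longrightarrow> j < dim_row A \<Longrightarrow>
    sign_transpose_mat A $$ (i, j) = (-1) ^ (i + j) * A $$ (j, i)"
  unfolding sign_transpose_mat_def by auto

lemma sign_transpose_one [simp]: "sign_transpose_mat (1\<^sub>m n) = 1\<^sub>m n"
  by (rule eq_matI) auto

lemma sign_transpose_mult:
  assumes "A \<in> carrier_mat n k" "B \<in> carrier_mat k m"
  shows "sign_transpose_mat (A * B) = sign_transpose_mat B * sign_transpose_mat A"
proof (rule eq_matI)
  let ?R = "sign_transpose_mat B * sign_transpose_mat A"
  fix i j assume "i < dim_row ?R" "j < dim_col ?R"
  then have i: "i < m" and j: "j < n" using assms by auto
  have sign: "(-1 :: 'a) ^ (l + i) * (-1) ^ (l + j) = (-1) ^ (i + j)" for l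
    by (simp add: power_add algebra_simps)
  have "?R $$ (i, j) = (\<Sum>l<k. (-1) ^ (i + l) * B $$ (l, i) * ((-1) ^ (l + j) * A $$ (j, l)))"
    using i j assms by (simp add: scalar_prod_def lessThan_atLeast0)
  also have "\<dots> = (-1) ^ (i + j) * (\<Sum>l<k. A $$ (j, l) * B $$ (l, i))"
    unfolding sum_distrib_left by (intro sum.cong refl) (simp add: ac_simps sign)
  also have "\<dots> = sign_transpose_mat (A * B) $$ (i, j)"
    using i j assms by (simp add: scalar_prod_def lessThan_atLeast0)
  finally show "sign_transpose_mat (A * B) $$ (i, j) = ?R $$ (i, j)" ..
qed (use assms in auto)

lemma square_block_sign_transpose:
  assumes "r + p \<le> dim_col A" "c + p \<le> dim_row A"
  shows "square_block (sign_transpose_mat A) r c p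
    = (-1) ^ (r + c) \<cdot>\<^sub>m sign_transpose_mat (square_block A c r p)"
  using assms by (intro eq_matI) (auto simp: power_add ac_simps)

lemma det_sign_transpose:
  assumes A: "A \<in> carrier_mat n n"
  shows "det (sign_transpose_mat A) = det A"
proof -
  have sign: "(\<Prod>i = 0..<n. (-1 :: 'a) ^ (i + \<pi> i)) = 1" if "\<pi> permutes {0..<n}" for \<pi>
  proof -
    have "(\<Prod>i = 0..<n. (-1 :: 'a) ^ (i + \<pi> i)) = (-1) ^ ((\<Sum>i = 0..<n. i) + (\<Sum>i = 0..<n. \<pi> i))"
      by (simp add: power_sum flip: sum.distrib)
    also have "(\<Sum>i = 0..<n. \<pi> i) = (\<Sum>i = 0..<n. i)"
      using sum.permute[OF that, of id] by simp
    finally show ?thesis by (simp flip: power_add)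
  qed
  have "det (sign_transpose_mat A)
      = (\<Sum>\<pi> | \<pi> permutes {0..<n}. signof \<pi> * (\<Prod>i = 0..<n. (-1) ^ (i + \<pi> i) * A $$ (\<pi> i, i)))"
    using A by (simp add: det_def'[of _ n])
  also have "\<dots> = det (transpose_mat A)"
    using A sign by (simp add: det_def'[of _ n] prod.distrib)
  also have "\<dots> = det A"
    using A by (rule det_transpose)
  finally show ?thesis .
qed

lemma lower_triangular_complementary_minor:
  fixes P Q :: "'a :: idom mat"
  assumes P: "P \<in> carrier_mat n n" and Q: "Q \<in> carrier_mat n n"
    and inverse: "P * sign_transpose_mat Q = 1\<^sub>m n"
    and lower: "\<And>i j. i < j \<Longrightarrow> j < n \<Longrightarrow> P $$ (i, j) = 0" and pq: "p + q \<le> n"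
  shows "det (square_block P p 0 q) = det (square_block P 0 0 (p + q)) * det (square_block Q 0 q p)"
proof -
  let ?A = "square_block P 0 0 (p + q)" and ?B = "square_block (sign_transpose_mat Q) 0 0 (p + q)"
  have "?A * ?B = 1\<^sub>m (p + q)"
    using lower_triangular_leading_block_mult[OF P _ lower pq, of "sign_transpose_mat Q"] Q pq
    by (simp add: inverse square_block_one_mat)
  then have "det (square_block ?A p 0 q) = (-1) ^ (p * q) * det ?A * det (square_block ?B q 0 p)"
    by (intro jacobi_complementary_minor) auto
  also have "square_block ?A p 0 q = square_block P p 0 q"
    by (simp add: square_block_square_block)
  also have "square_block ?B q 0 p = (-1) ^ q \<cdot>\<^sub>m sign_transpose_mat (square_block Q 0 q p)"
    using Q pq by (subst square_block_square_block) (auto simp: square_block_sign_transpose)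
  also have "det \<dots> = (-1) ^ (p * q) * det (square_block Q 0 q p)"
    by (simp add: det_sign_transpose[OF square_block_carrier] power_mult mult.commute[of p])
  finally show ?thesis
    by (simp add: ac_simps)
qed

lemma W_mat_carrier [simp]: "W_mat n a \<in> carrier_mat n n"
  by (simp add: W_mat_def)

lemma H_mat_carrier [simp]: "H_mat n a \<in> carrier_mat n n"
  by (simp add: H_mat_def)

lemma W_mat_lower_triangular: "i < j \<Longrightarrow> j < n \<Longrightarrow> W_mat n a $$ (i, j) = 0"
  by (simp add: W_mat_def)

lemma index_W_mat_mult:
  assumes "B \<in> carrier_mat n k" "i < n" "j < k"
  shows "(W_mat n a * B) $$ (i, j) = a (Suc i) * B $$ (i, j) + (if i = 0 then 0 else B $$ (i - 1, j))"
proof -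
  have "(W_mat n a * B) $$ (i, j) = (\<Sum>l<n. (if l = i then a (Suc i) * B $$ (i, j) else 0)
      + (if 0 < i \<and> l = i - 1 then B $$ (l, j) else 0))"
    using assms by (auto simp: W_mat_def scalar_prod_def lessThan_atLeast0 intro!: sum.cong)
  then show ?thesis
    using assms by (simp add: sum.distrib)
qed

lemma index_sign_transpose_H_mat:
  "i < n \<Longrightarrow> j < n \<Longrightarrow> sign_transpose_mat (H_mat n a) $$ (i, j)
    = (if j \<le> i then (-1) ^ (i + j) * (\<Prod>t = Suc j..Suc i. a t) else 0)"
  by (simp add: H_mat_def)

lemma W_mat_mult_sign_transpose_H_mat:
  assumes nz: "\<And>k. 1 \<le> k \<Longrightarrow> k \<le> n \<Longrightarrow> a k \<noteq> 0"
  shows "W_mat n a * sign_transpose_mat (H_mat n (\<lambda>k. 1 / a k)) = 1\<^sub>m n"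
proof (rule eq_matI)
  fix i j assume "i < dim_row (1\<^sub>m n :: complex mat)" "j < dim_col (1\<^sub>m n :: complex mat)"
  then have i: "i < n" and j: "j < n" by auto
  let ?S = "sign_transpose_mat (H_mat n (\<lambda>k. 1 / a k))"
  have a: "a (Suc i) \<noteq> 0" using nz i by simp
  consider "i < j" | "i = j" | "j < i" by linarith
  then have "a (Suc i) * ?S $$ (i, j) + (if i = 0 then 0 else ?S $$ (i - 1, j)) = 1\<^sub>m n $$ (i, j)"
  proof cases
    case 3
    then obtain i' where i': "i = Suc i'" by (cases i) auto
    have "?S $$ (i, j) = - ?S $$ (i', j) / a (Suc i)"
      using 3 i j unfolding i' by (simp add: index_sign_transpose_H_mat prod.nat_ivl_Suc')
    then show ?thesis using 3 a i' i j by (simp add: field_simps)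
  qed (use i j a in \<open>auto simp: index_sign_transpose_H_mat\<close>)
  then show "(W_mat n a * ?S) $$ (i, j) = 1\<^sub>m n $$ (i, j)"
    using i j by (simp add: index_W_mat_mult[of ?S n n])
qed (simp_all add: W_mat_def H_mat_def)

lemma foldr_mult_carrier:
  "(\<And>i. i \<in> set xs \<Longrightarrow> F i \<in> carrier_mat n n)
    \<Longrightarrow> foldr (\<lambda>i A. F i * A) xs (1\<^sub>m n) \<in> carrier_mat n n"
  by (induction xs) (auto intro: mult_carrier_mat)

lemma foldr_mult_lower_triangular:
  assumes "\<And>i. i \<in> set xs \<Longrightarrow> F i \<in> carrier_mat n n"
    and "\<And>i k l. i \<in> set xs \<Longrightarrow> k < l \<Longrightarrow> l < n \<Longrightarrow> F i $$ (k, l) = 0"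
    and "k < l" "l < n"
  shows "foldr (\<lambda>i A. F i * A) xs (1\<^sub>m n) $$ (k, l) = 0"
  using assms
proof (induction xs arbitrary: k l)
  case (Cons x xs)
  have "foldr (\<lambda>i A. F i * A) xs (1\<^sub>m n) \<in> carrier_mat n n"
    using Cons.prems(1) by (intro foldr_mult_carrier) auto
  then show ?case
    using Cons by (simp, intro lower_triangular_mult[where n = n]) auto
qed simp

lemma foldr_mult_sign_transpose_inverse:
  assumes "\<And>i. i \<in> set xs \<Longrightarrow> F i \<in> carrier_mat n n"
    and "\<And>i. i \<in> set xs \<Longrightarrow> G i \<in> carrier_mat n n"
    and "\<And>i. i \<in> set xs \<Longrightarrow> F i * sign_transpose_mat (G i) = 1\<^sub>m n"
  shows "foldr (\<lambda>i A. F i * A) xs (1\<^sub>m n)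
    * sign_transpose_mat (foldr (\<lambda>i A. G i * A) xs (1\<^sub>m n)) = 1\<^sub>m n"
  using assms
proof (induction xs)
  case (Cons x xs)
  let ?F = "foldr (\<lambda>i A. F i * A) xs (1\<^sub>m n)" and ?G = "foldr (\<lambda>i A. G i * A) xs (1\<^sub>m n)"
  have F: "F x \<in> carrier_mat n n" "?F \<in> carrier_mat n n"
    and G: "G x \<in> carrier_mat n n" "?G \<in> carrier_mat n n"
    using Cons.prems by (auto intro!: foldr_mult_carrier)
  have ST: "sign_transpose_mat ?G \<in> carrier_mat n n" "sign_transpose_mat (G x) \<in> carrier_mat n n"
    using G by simp_all
  have "F x * ?F * sign_transpose_mat (G x * ?G)
      = F x * (?F * (sign_transpose_mat ?G * sign_transpose_mat (G x)))"
    using assoc_mult_mat[OF F mult_carrier_mat[OF ST]] by (simp add: sign_transpose_mult[OF G])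
  also have "\<dots> = F x * (?F * sign_transpose_mat ?G * sign_transpose_mat (G x))"
    using assoc_mult_mat[OF F(2) ST] by simp
  also have "\<dots> = F x * sign_transpose_mat (G x)"
    using Cons left_mult_one_mat[OF ST(2)] by simp
  finally show ?case
    using Cons by simp
qed simp

lemma prodW_carrier: "prodW n m x \<in> carrier_mat n n"
  unfolding prodW_def by (rule foldr_mult_carrier) simp

lemma prodH_carrier: "prodH n m x \<in> carrier_mat n n"
  unfolding prodH_def by (rule foldr_mult_carrier) simp

lemma prodW_lower_triangular: "k < l \<Longrightarrow> l < n \<Longrightarrow> prodW n m x $$ (k, l) = 0"
  unfolding prodW_def by (rule foldr_mult_lower_triangular) (simp_all add: W_mat_lower_triangular)

lemma prodW_mult_sign_transpose_prodH:
  assumes "\<And>a k. 1 \<le> a \<Longrightarrow> a \<le> m \<Longrightarrow> 1 \<le> k \<Longrightarrow> k \<le> n \<Longrightarrow> x a k \<noteq> 0"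
  shows "prodW n m x * sign_transpose_mat (prodH n m x) = 1\<^sub>m n"
  unfolding prodW_def prodH_def
  using assms by (intro foldr_mult_sign_transpose_inverse W_mat_mult_sign_transpose_H_mat) auto

lemma Delta_prodW_eq_Delta_prodH:
  assumes "\<And>a k. 1 \<le> a \<Longrightarrow> a \<le> m \<Longrightarrow> 1 \<le> k \<Longrightarrow> k \<le> n \<Longrightarrow> x a k \<noteq> 0"
    and "p + q \<le> n"
  shows "Delta (prodW n m x) {Suc p..p + q} {1..q}
    = det (square_block (prodW n m x) 0 0 (p + q)) * Delta (prodH n m x) {1..p} {Suc q..p + q}"
proof -
  have "Delta (prodW n m x) {Suc p..p + q} {1..q} = det (square_block (prodW n m x) p 0 q)"
    using Delta_square_block[of p q "prodW n m x" 0] prodW_carrier[of n m x] assms(2) by simp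
  also have "\<dots> = det (square_block (prodW n m x) 0 0 (p + q)) * det (square_block (prodH n m x) 0 q p)"
    using prodW_carrier prodH_carrier prodW_mult_sign_transpose_prodH[OF assms(1)]
      prodW_lower_triangular assms(2)
    by (rule lower_triangular_complementary_minor)
  also have "det (square_block (prodH n m x) 0 q p) = Delta (prodH n m x) {1..p} {Suc q..p + q}"
    using Delta_square_block[of 0 p "prodH n m x" q] prodH_carrier[of n m x] assms(2)
    by (simp add: add.commute)
  finally show ?thesis .
qed

theorem lemma4p12:
  fixes n m i j :: nat and x :: "nat \<Rightarrow> nat \<Rightarrow> complex"
  assumes nz: "\<And>a k. 1 \<le> a \<Longrightarrow> a \<le> m \<Longrightarrow> 1 \<le> k \<Longrightarrow> k \<le> n \<Longrightarrow> x a k \<noteq> 0"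
    and i: "1 \<le> i" "i \<le> m" and j: "i \<le> j" "j \<le> n"
    and denH: "Delta (prodH n m x) {1..i} {j-i+1..j} \<noteq> 0"
    and denW: "Delta (prodW n m x) {i+1..j} {1..j-i} \<noteq> 0"
  shows "Delta (prodH n m x) {1..i-1} {j-i+2..j} / Delta (prodH n m x) {1..i} {j-i+1..j}
       = Delta (prodW n m x) {i..j} {1..j-i+1} / Delta (prodW n m x) {i+1..j} {1..j-i}"
proof -
  let ?D = "det (square_block (prodW n m x) 0 0 j)"
  have den: "Delta (prodW n m x) {i+1..j} {1..j-i} = ?D * Delta (prodH n m x) {1..i} {j-i+1..j}"
    using Delta_prodW_eq_Delta_prodH[OF nz, where p = i and q = "j - i"] j by simp
  have num: "Delta (prodW n m x) {i..j} {1..j-i+1} = ?D * Delta (prodH n m x) {1..i-1} {j-i+2..j}"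
    using Delta_prodW_eq_Delta_prodH[OF nz, where p = "i - 1" and q = "j - i + 1"] i j
    by (simp add: Suc_diff_le)
  have "?D \<noteq> 0"
    using denW den by auto
  then show ?thesis
    unfolding den num by simp
qed

end
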